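(* Let $\mathcal{F}=(f_s:I_s\to[n]\mid s\in S)$ be an $S$-claw in $\Delta$. If $\mathcal{F}$ is compatible and either left active or right active, then $\mathcal{F}$ is cyclically compatible. Moreover, the following are equivalent: (1) $\mathcal{F}$ is cyclically compatible; (2) for every $m\in[n]$ the cyclic rotation $\mathcal{F}^{+m}$ is compatible; (3) there is $m\in[n]$ such that $\mathcal{F}^{+m}$ is left active and compatible; (4) there is $m\in[n]$ such that $\mathcal{F}^{+m}$ is right active and compatible.
   Context: $\Delta$: simplex category of $[n]=\{0<\dots<n\}$, weakly monotone maps. An $S$-claw on $[n]$ is a family $f_s:I_s\to[n]$; it is left (right) active if each $f_s$ preserves minima (maxima). Compatible: (BC1) for each $i\in[n]$ at most one $s$ has $f_s^{-1}\{i\}$ not a singleton; (BC2) for each $0<i\le n$ at most one $s$ has $\{i-1,i\}\not\subseteq f_s(I_s)$. Cyclically compatible: compatible and all but at most one $s$ satisfy $\{0,n\}\subseteq f_s(I_s)$. Cyclic rotation: for $m\in[n]$, let $[n]^{+m}$ be the set $\{0,\dots,n\}$ with the order $n-m+1\prec\dots\prec n\prec0\prec\dots\prec n-m$, and $I_s^{+m}$ the set $I_s$ with the order in which the elements of $f_s^{-1}\{n-m+1,\dots,n\}$ (in their original order) precede those of $f_s^{-1}\{0,\dots,n-m\}$ (in their original order); then $f_s^{+m}:I_s^{+m}\to[n]^{+m}$ (same underlying map) is order preserving, and $\mathcal{F}^{+m}=(f_s^{+m})_{s\in S}$, regarded as a claw in $\Delta$ via the unique order isomorphisms with standard ordinals.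 (This is the rotation induced by the cyclic category $\Lambda$, where $\Delta\cong\Lambda_{/\langle0\rangle}$.) *)

theory Defs
  imports Main
begin

(* An S-claw on [n] in Delta: for each s in S a weakly monotone map
   f s : [k s] = {0..k s} -> [n] = {0..n}.  Only values on {0..k s} matter. *)
definition claw :: "nat \<Rightarrow> 's set \<Rightarrow> ('s \<Rightarrow> nat) \<Rightarrow> ('s \<Rightarrow> nat \<Rightarrow> nat) \<Rightarrow> bool" where
  "claw n S k f \<longleftrightarrow> (\<forall>s\<in>S. (\<forall>i j. i \<le> j \<and> j \<le> k s \<longrightarrow> f s i \<le> f s j) \<and> (\<forall>i\<le>k s. f s i \<le> n))"

definition fib :: "('s \<Rightarrow> nat) \<Rightarrow> ('s \<Rightarrow> nat \<Rightarrow> nat) \<Rightarrow> 's \<Rightarrow> nat \<Rightarrow> nat set" where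
  "fib k f s i = {j. j \<le> k s \<and> f s j = i}"

definition img :: "('s \<Rightarrow> nat) \<Rightarrow> ('s \<Rightarrow> nat \<Rightarrow> nat) \<Rightarrow> 's \<Rightarrow> nat set" where
  "img k f s = f s ` {0..k s}"

definition compatible :: "nat \<Rightarrow> 's set \<Rightarrow> ('s \<Rightarrow> nat) \<Rightarrow> ('s \<Rightarrow> nat \<Rightarrow> nat) \<Rightarrow> bool" where
  "compatible n S k f \<longleftrightarrow>
     (\<forall>i\<le>n. \<forall>s\<in>S. \<forall>t\<in>S.
        \<not> (\<exists>x. fib k f s i = {x}) \<and> \<not> (\<exists>x. fib k f t i = {x}) \<longrightarrow> s = t) \<and>
     (\<forall>i. 0 < i \<and> i \<le> n \<longrightarrow> (\<forall>s\<in>S. \<forall>t\<in>S.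
        \<not> {i - 1, i} \<subseteq> img k f s \<and> \<not> {i - 1, i} \<subseteq> img k f t \<longrightarrow> s = t))"

definition cyc_compatible :: "nat \<Rightarrow> 's set \<Rightarrow> ('s \<Rightarrow> nat) \<Rightarrow> ('s \<Rightarrow> nat \<Rightarrow> nat) \<Rightarrow> bool" where
  "cyc_compatible n S k f \<longleftrightarrow> compatible n S k f \<and>
     (\<forall>s\<in>S. \<forall>t\<in>S. \<not> {0, n} \<subseteq> img k f s \<and> \<not> {0, n} \<subseteq> img k f t \<longrightarrow> s = t)"

definition left_active :: "'s set \<Rightarrow> ('s \<Rightarrow> nat \<Rightarrow> nat) \<Rightarrow> bool" where
  "left_active S f \<longleftrightarrow> (\<forall>s\<in>S. f s 0 = 0)"

definition right_active :: "nat \<Rightarrow> 's set \<Rightarrow> ('s \<Rightarrow> nat) \<Rightarrow> ('s \<Rightarrow> nat \<Rightarrow> nat) \<Rightarrow> bool" where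
  "right_active n S k f \<longleftrightarrow> (\<forall>s\<in>S. f s (k s) = n)"

(* Cyclic rotation F^{+m}, transported to standard ordinals.
   [n]^{+m} -> [n] via i |-> (i + m) mod (n+1).
   I_s^{+m} -> [k s]: with c = |f_s^{-1}{n-m+1..n}| the rotated order on {0..k s}
   starts at k s + 1 - c; the standard position j corresponds to the original
   element (j + k s + 1 - c) mod (k s + 1). *)
definition rot_shift :: "nat \<Rightarrow> nat \<Rightarrow> ('s \<Rightarrow> nat) \<Rightarrow> ('s \<Rightarrow> nat \<Rightarrow> nat) \<Rightarrow> 's \<Rightarrow> nat" where
  "rot_shift n m k f s = card {j. j \<le> k s \<and> n + 1 \<le> f s j + m}"

definition rot :: "nat \<Rightarrow> nat \<Rightarrow> ('s \<Rightarrow> nat) \<Rightarrow> ('s \<Rightarrow> nat \<Rightarrow> nat) \<Rightarrow> 's \<Rightarrow> nat \<Rightarrow> nat" where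
  "rot n m k f s j =
     (f s ((j + (k s + 1 - rot_shift n m k f s)) mod (k s + 1)) + m) mod (n + 1)"

end

theory Submission
  imports Defs "HOL-Number_Theory.Cong"
begin

(* Cyclic compatibility is compatibility on the cycle 0, 1, ..., n, 0: besides the fibre
   condition (BC1) at every vertex it asks for the edge condition (BC2) at all n+1 cyclic
   edges {a, a+1 mod (n+1)}, whereas plain compatibility omits the wrapping edge {n, 0}.
   Rotating by m permutes each domain cyclically and moves every image by a |-> a+m mod (n+1),
   so fibre cardinalities are preserved and the edge condition at a becomes the one at a+m.
   Hence cyclic compatibility is invariant under rotation, and compatibility of all rotations
   covers every cyclic edge.
   If every image contains 0 (left active) or n (right active), two components missing {n, 0}
   would both miss the ordinary edge {n-1, n} or {0, 1}, so the wrapping edge is harmless.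
   Conversely a compatible claw has a vertex v in every image (otherwise the unique component
   missing 0 would, edge by edge, miss every vertex), and rotating v to 0, resp. to n, gives a
   left, resp. right, active rotation. *)

definition cyc_shift :: "nat \<Rightarrow> nat \<Rightarrow> nat \<Rightarrow> nat" where
  "cyc_shift N d j = (j + d) mod Suc N"

lemma cyc_shift_le: "cyc_shift N d j \<le> N"
  unfolding cyc_shift_def using less_Suc_eq_le by auto

lemma cyc_shift_commute: "cyc_shift N d (cyc_shift N e j) = cyc_shift N e (cyc_shift N d j)"
  unfolding cyc_shift_def by (simp add: mod_simps ac_simps)

lemma inj_on_cyc_shift: "inj_on (cyc_shift N d) {..N}"
proof (rule inj_onI)
  fix i j assume "i \<in> {..N}" "j \<in> {..N}" "cyc_shift N d i = cyc_shift N d j"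
  then have "[i = j] (mod Suc N)"
    unfolding cyc_shift_def cong_def[symmetric] by (simp add: cong_add_rcancel_nat)
  then show "i = j" using \<open>i \<in> {..N}\<close> \<open>j \<in> {..N}\<close> by (simp add: cong_def)
qed

lemma bij_betw_cyc_shift: "bij_betw (cyc_shift N d) {..N} {..N}"
proof -
  have "cyc_shift N d ` {..N} \<subseteq> {..N}" using cyc_shift_le by auto
  then show ?thesis
    using inj_on_cyc_shift by (simp add: bij_betw_def card_subset_eq card_image)
qed

lemma card_fibre_comp_bij:
  assumes \<sigma>: "bij_betw \<sigma> A A" and \<rho>: "inj_on \<rho> B" and f: "f ` A \<subseteq> B" and a: "a \<in> B"
  shows "card {j \<in> A. \<rho> (f (\<sigma> j)) = \<rho> a} = card {j \<in> A. f j = a}"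
proof -
  have "{j \<in> A. \<rho> (f (\<sigma> j)) = \<rho> a} = {j \<in> A. f (\<sigma> j) = a}"
    using bij_betwE[OF \<sigma>] f a inj_onD[OF \<rho>] by blast
  moreover have "\<sigma> ` {j \<in> A. f (\<sigma> j) = a} = {j \<in> A. f j = a}"
    using bij_betw_imp_surj_on[OF \<sigma>] by auto
  then have "bij_betw \<sigma> {j \<in> A. f (\<sigma> j) = a} {j \<in> A. f j = a}"
    by (rule bij_betw_subset[OF \<sigma>, rotated]) auto
  ultimately show ?thesis by (simp add: bij_betw_same_card)
qed

lemma all_atMost_reindex_cyc_shift:
  assumes "\<And>a. a \<le> N \<Longrightarrow> P (cyc_shift N d a) \<longleftrightarrow> Q a"
  shows "(\<forall>i\<le>N. P i) \<longleftrightarrow> (\<forall>a\<le>N. Q a)"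
proof -
  have "{..N} = cyc_shift N d ` {..N}"
    using bij_betw_cyc_shift by (rule bij_betw_imp_surj_on[symmetric])
  then have "(\<forall>i\<le>N. P i) \<longleftrightarrow> (\<forall>a\<le>N. P (cyc_shift N d a))"
    by (metis atMost_iff imageE imageI)
  with assms show ?thesis by simp
qed

lemma claw_le: "claw n S k f \<Longrightarrow> s \<in> S \<Longrightarrow> j \<le> k s \<Longrightarrow> f s j \<le> n"
  unfolding claw_def by blast

lemma claw_mono: "claw n S k f \<Longrightarrow> s \<in> S \<Longrightarrow> i \<le> j \<Longrightarrow> j \<le> k s \<Longrightarrow> f s i \<le> f s j"
  unfolding claw_def by blast

lemma img_subset: "claw n S k f \<Longrightarrow> s \<in> S \<Longrightarrow> img k f s \<subseteq> {..n}"
  unfolding img_def using claw_le by fastforce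

lemma rot_eq_cyc_shift:
  "rot n m k f s j = cyc_shift n m (f s (cyc_shift (k s) (Suc (k s) - rot_shift n m k f s) j))"
  unfolding rot_def cyc_shift_def by simp

lemma img_rot: "img k (rot n m k f) s = cyc_shift n m ` img k f s"
proof -
  define d where "d = Suc (k s) - rot_shift n m k f s"
  have "img k (rot n m k f) s = cyc_shift n m ` f s ` cyc_shift (k s) d ` {..k s}"
    unfolding img_def rot_eq_cyc_shift d_def atLeast0AtMost by (simp add: image_image)
  also have "cyc_shift (k s) d ` {..k s} = {..k s}"
    using bij_betw_cyc_shift by (rule bij_betw_imp_surj_on)
  finally show ?thesis unfolding img_def atLeast0AtMost .
qed

lemma mem_img_rot_iff:
  assumes "claw n S k f" "s \<in> S" "a \<le> n"
  shows "cyc_shift n m a \<in> img k (rot n m k f) s \<longleftrightarrow> a \<in> img k f s"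
  unfolding img_rot using assms(3) inj_on_image_mem_iff[OF inj_on_cyc_shift _ img_subset[OF assms(1,2)]]
  by simp

lemma card_fib_rot:
  assumes "claw n S k f" "s \<in> S" "a \<le> n"
  shows "card (fib k (rot n m k f) s (cyc_shift n m a)) = card (fib k f s a)"
proof -
  define d where "d = Suc (k s) - rot_shift n m k f s"
  have "f s ` {..k s} \<subseteq> {..n}" using img_subset[OF assms(1,2)] by (simp add: img_def atLeast0AtMost)
  then have "card {j \<in> {..k s}. cyc_shift n m (f s (cyc_shift (k s) d j)) = cyc_shift n m a}
           = card {j \<in> {..k s}. f s j = a}"
    using assms(3) by (intro card_fibre_comp_bij[OF bij_betw_cyc_shift inj_on_cyc_shift]) auto
  then show ?thesis unfolding fib_def rot_eq_cyc_shift d_def by (simp only: atMost_iff)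
qed

definition fibre_compatible :: "nat \<Rightarrow> 's set \<Rightarrow> ('s \<Rightarrow> nat) \<Rightarrow> ('s \<Rightarrow> nat \<Rightarrow> nat) \<Rightarrow> bool" where
  "fibre_compatible n S k g \<longleftrightarrow> (\<forall>i\<le>n. \<forall>s\<in>S. \<forall>t\<in>S.
     \<not> (\<exists>x. fib k g s i = {x}) \<and> \<not> (\<exists>x. fib k g t i = {x}) \<longrightarrow> s = t)"

definition edge_compatible :: "nat \<Rightarrow> 's set \<Rightarrow> ('s \<Rightarrow> nat) \<Rightarrow> ('s \<Rightarrow> nat \<Rightarrow> nat) \<Rightarrow> nat \<Rightarrow> bool" where
  "edge_compatible n S k g a \<longleftrightarrow> (\<forall>s\<in>S. \<forall>t\<in>S.
     \<not> {a, cyc_shift n 1 a} \<subseteq> img k g s \<and> \<not> {a, cyc_shift n 1 a} \<subseteq> img k g t \<longrightarrow> s = t)"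

lemma compatible_iff_fibre_edge:
  "compatible n S k g \<longleftrightarrow> fibre_compatible n S k g \<and> (\<forall>a<n. edge_compatible n S k g a)"
proof -
  define edge_below where "edge_below i \<longleftrightarrow> (\<forall>s\<in>S. \<forall>t\<in>S.
      \<not> {i - 1, i} \<subseteq> img k g s \<and> \<not> {i - 1, i} \<subseteq> img k g t \<longrightarrow> s = t)" for i
  have "edge_compatible n S k g a \<longleftrightarrow> edge_below (Suc a)" if "a < n" for a
    using that unfolding edge_compatible_def edge_below_def cyc_shift_def by simp
  then have "(\<forall>a<n. edge_compatible n S k g a) \<longleftrightarrow> (\<forall>a<n. edge_below (Suc a))"
    by simp
  also have "\<dots> \<longleftrightarrow> (\<forall>i. 0 < i \<and> i \<le> n \<longrightarrow> edge_below i)"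
  proof (intro iffI allI impI)
    fix i assume "\<forall>a<n. edge_below (Suc a)" and "0 < i \<and> i \<le> n"
    then show "edge_below i" by (metis Suc_le_eq gr0_implies_Suc)
  qed simp
  finally show ?thesis unfolding compatible_def fibre_compatible_def edge_below_def by simp
qed

lemma cyc_compatible_iff_fibre_edge:
  "cyc_compatible n S k g \<longleftrightarrow> fibre_compatible n S k g \<and> (\<forall>a\<le>n. edge_compatible n S k g a)"
proof -
  have "{n, cyc_shift n 1 n} = {0, n}" by (auto simp: cyc_shift_def)
  then have "edge_compatible n S k g n \<longleftrightarrow>
      (\<forall>s\<in>S. \<forall>t\<in>S. \<not> {0, n} \<subseteq> img k g s \<and> \<not> {0, n} \<subseteq> img k g t \<longrightarrow> s = t)"
    unfolding edge_compatible_def by simp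
  moreover have "(\<forall>a\<le>n. edge_compatible n S k g a) \<longleftrightarrow>
      (\<forall>a<n. edge_compatible n S k g a) \<and> edge_compatible n S k g n"
    by (auto simp: le_less)
  ultimately show ?thesis
    unfolding cyc_compatible_def compatible_iff_fibre_edge by blast
qed

lemma singleton_fib_rot_iff:
  assumes "claw n S k f" "s \<in> S" "a \<le> n"
  shows "(\<exists>x. fib k (rot n m k f) s (cyc_shift n m a) = {x}) \<longleftrightarrow> (\<exists>x. fib k f s a = {x})"
  using card_fib_rot[OF assms, of m] by (metis card_1_singleton_iff)

lemma fibre_compatible_rot_iff:
  assumes "claw n S k f"
  shows "fibre_compatible n S k (rot n m k f) \<longleftrightarrow> fibre_compatible n S k f"
  unfolding fibre_compatible_def
proof (rule all_atMost_reindex_cyc_shift[where d = m])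
  fix a assume "a \<le> n"
  with singleton_fib_rot_iff[OF assms _ this]
  show "(\<forall>s\<in>S. \<forall>t\<in>S. \<not> (\<exists>x. fib k (rot n m k f) s (cyc_shift n m a) = {x}) \<and>
          \<not> (\<exists>x. fib k (rot n m k f) t (cyc_shift n m a) = {x}) \<longrightarrow> s = t) \<longleftrightarrow>
        (\<forall>s\<in>S. \<forall>t\<in>S. \<not> (\<exists>x. fib k f s a = {x}) \<and> \<not> (\<exists>x. fib k f t a = {x}) \<longrightarrow> s = t)"
    by blast
qed

lemma edge_compatible_rot_iff:
  assumes "claw n S k f" "a \<le> n"
  shows "edge_compatible n S k (rot n m k f) (cyc_shift n m a) \<longleftrightarrow> edge_compatible n S k f a"
  unfolding edge_compatible_def cyc_shift_commute[of n 1 m]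
  by (simp add: mem_img_rot_iff[OF assms(1)] assms(2) cyc_shift_le cong: ball_cong)

lemma cyc_compatible_rot_iff:
  assumes "claw n S k f"
  shows "cyc_compatible n S k (rot n m k f) \<longleftrightarrow> cyc_compatible n S k f"
proof -
  have "(\<forall>i\<le>n. edge_compatible n S k (rot n m k f) i) \<longleftrightarrow> (\<forall>a\<le>n. edge_compatible n S k f a)"
    by (rule all_atMost_reindex_cyc_shift[where d = m]) (rule edge_compatible_rot_iff[OF assms])
  then show ?thesis
    unfolding cyc_compatible_iff_fibre_edge fibre_compatible_rot_iff[OF assms] by simp
qed

lemma cyc_compatible_if_endpoint_in_all_img:
  assumes "compatible n S k g" and "(\<forall>s\<in>S. 0 \<in> img k g s) \<or> (\<forall>s\<in>S. n \<in> img k g s)"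
  shows "cyc_compatible n S k g"
  unfolding cyc_compatible_def
proof (intro conjI assms(1) ballI impI)
  fix s t assume st: "s \<in> S" "t \<in> S" "\<not> {0, n} \<subseteq> img k g s \<and> \<not> {0, n} \<subseteq> img k g t"
  have n: "0 < n" using assms(2) st by (cases n) auto
  obtain i where "0 < i" "i \<le> n" "\<not> {i - 1, i} \<subseteq> img k g s" "\<not> {i - 1, i} \<subseteq> img k g t"
  proof (cases "\<forall>s\<in>S. 0 \<in> img k g s")
    case True
    then show ?thesis using that[of n] n st by auto
  next
    case False
    then show ?thesis using that[of 1] n st assms(2) by auto
  qed
  then show "s = t" using assms(1) st(1,2) unfolding compatible_def by blast
qed

lemma zero_in_img_if_left_active: "left_active S g \<Longrightarrow> s \<in> S \<Longrightarrow> 0 \<in> img k g s"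
  unfolding left_active_def img_def by force

lemma top_in_img_if_right_active: "right_active n S k g \<Longrightarrow> s \<in> S \<Longrightarrow> n \<in> img k g s"
  unfolding right_active_def img_def by force

lemma cyc_compatible_if_left_active:
  assumes "compatible n S k g" "left_active S g"
  shows "cyc_compatible n S k g"
  by (rule cyc_compatible_if_endpoint_in_all_img[OF assms(1)])
    (simp add: zero_in_img_if_left_active[OF assms(2)])

lemma cyc_compatible_if_right_active:
  assumes "compatible n S k g" "right_active n S k g"
  shows "cyc_compatible n S k g"
  by (rule cyc_compatible_if_endpoint_in_all_img[OF assms(1)])
    (simp add: top_in_img_if_right_active[OF assms(2)])

lemma compatible_common_vertex:
  assumes cl: "claw n S k f" and c: "compatible n S k f"
  shows "\<exists>v\<le>n. \<forall>s\<in>S. v \<in> img k f s"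
proof (rule ccontr)
  assume "\<not> ?thesis"
  then have miss: "\<exists>s\<in>S. v \<notin> img k f s" if "v \<le> n" for v
    using that by blast
  then obtain s0 where s0: "s0 \<in> S" "0 \<notin> img k f s0" by blast
  have "v \<notin> img k f s0" if "v \<le> n" for v
    using that
  proof (induction v)
    case (Suc v)
    obtain t where t: "t \<in> S" "Suc v \<notin> img k f t" using miss Suc.prems by blast
    have "\<not> {Suc v - 1, Suc v} \<subseteq> img k f s0" "\<not> {Suc v - 1, Suc v} \<subseteq> img k f t"
      using Suc t by auto
    then have "s0 = t" using c s0(1) t(1) Suc.prems unfolding compatible_def by blast
    with t show ?case by simp
  qed (use s0 in simp)
  moreover have "f s0 0 \<in> img k f s0" "f s0 0 \<le> n"
    using claw_le[OF cl s0(1)] unfolding img_def by auto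
  ultimately show False by blast
qed

lemma mono_threshold:
  fixes g :: "nat \<Rightarrow> nat"
  assumes "\<And>i j. i \<le> j \<Longrightarrow> j \<le> K \<Longrightarrow> g i \<le> g j"
  obtains p where "p \<le> Suc K" "\<And>j. j \<le> K \<Longrightarrow> c \<le> g j \<longleftrightarrow> p \<le> j"
proof
  define p where "p = (LEAST j. K < j \<or> c \<le> g j)"
  show "p \<le> Suc K"
    unfolding p_def by (rule Least_le) simp
  show "c \<le> g j \<longleftrightarrow> p \<le> j" if "j \<le> K" for j
  proof
    assume "c \<le> g j"
    then show "p \<le> j" unfolding p_def by (rule Least_le[OF disjI2])
  next
    assume "p \<le> j"
    have "K < p \<or> c \<le> g p"
      unfolding p_def by (rule LeastI[of _ "Suc K"]) simp
    then show "c \<le> g j" using \<open>p \<le> j\<close> that assms[of p j] by linarith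
  qed
qed

(* By monotonicity the points sent into the top part {n+1-m..n} form a final segment
   {p..k s} of the domain; the rotated domain starts at p. *)
lemma rot_eq_if_threshold:
  assumes "p \<le> Suc (k s)" and "\<And>j. j \<le> k s \<Longrightarrow> n + 1 \<le> f s j + m \<longleftrightarrow> p \<le> j"
  shows "rot n m k f s j = cyc_shift n m (f s (cyc_shift (k s) p j))"
proof -
  have "{j. j \<le> k s \<and> n + 1 \<le> f s j + m} = {p..k s}"
    using assms(2) by auto
  then have "rot_shift n m k f s = Suc (k s) - p"
    unfolding rot_shift_def by simp
  then show ?thesis
    unfolding rot_eq_cyc_shift using assms(1) by simp
qed

lemma exists_rot_left_active:
  assumes cl: "claw n S k f" and v: "v \<le> n" "\<forall>s\<in>S. v \<in> img k f s"
  shows "\<exists>m\<le>n. left_active S (rot n m k f)"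
proof (cases "v = 0")
  case True
  have "rot n 0 k f s 0 = 0" if s: "s \<in> S" for s
  proof -
    have "rot n 0 k f s 0 = cyc_shift n 0 (f s (cyc_shift (k s) (Suc (k s)) 0))"
      using claw_le[OF cl s] by (intro rot_eq_if_threshold) (auto simp: not_less_eq_eq)
    also have "\<dots> = f s 0"
      using claw_le[OF cl s, of 0] by (simp add: cyc_shift_def)
    also have "\<dots> = 0"
      using v(2) s True claw_mono[OF cl s] unfolding img_def by fastforce
    finally show ?thesis .
  qed
  then show ?thesis unfolding left_active_def by auto
next
  case False
  define m where "m = Suc n - v"
  have "rot n m k f s 0 = 0" if s: "s \<in> S" for s
  proof -
    obtain j0 where j0: "j0 \<le> k s" "f s j0 = v" using v(2) s unfolding img_def by auto
    obtain p where p: "p \<le> Suc (k s)" "\<And>j. j \<le> k s \<Longrightarrow> v \<le> f s j \<longleftrightarrow> p \<le> j"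
      using mono_threshold claw_mono[OF cl s] by metis
    have "p \<le> j0" using p(2)[OF j0(1)] j0(2) by simp
    then have "f s p = v" using p(2)[of p] claw_mono[OF cl s _ j0(1)] j0 by fastforce
    have "n + 1 \<le> x + m \<longleftrightarrow> v \<le> x" for x
      using v(1) unfolding m_def by arith
    then have "rot n m k f s 0 = cyc_shift n m (f s (cyc_shift (k s) p 0))"
      using p by (intro rot_eq_if_threshold) auto
    also have "\<dots> = 0"
      using \<open>p \<le> j0\<close> j0(1) \<open>f s p = v\<close> v(1) by (simp add: cyc_shift_def m_def)
    finally show ?thesis .
  qed
  moreover have "m \<le> n" using False m_def by simp
  ultimately show ?thesis unfolding left_active_def by auto
qed

lemma exists_rot_right_active:
  assumes cl: "claw n S k f" and v: "v \<le> n" "\<forall>s\<in>S. v \<in> img k f s"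
  shows "\<exists>m\<le>n. right_active n S k (rot n m k f)"
proof -
  define m where "m = n - v"
  have "rot n m k f s (k s) = n" if s: "s \<in> S" for s
  proof -
    obtain j0 where j0: "j0 \<le> k s" "f s j0 = v" using v(2) s unfolding img_def by auto
    obtain p where p: "p \<le> Suc (k s)" "\<And>j. j \<le> k s \<Longrightarrow> Suc v \<le> f s j \<longleftrightarrow> p \<le> j"
      using mono_threshold claw_mono[OF cl s] by metis
    have "j0 < p" using p(2) j0 by fastforce
    have "p - 1 \<le> k s" using \<open>j0 < p\<close> p(1) by linarith
    have "\<not> Suc v \<le> f s (p - 1)" using p(2)[OF \<open>p - 1 \<le> k s\<close>] \<open>j0 < p\<close> by simp
    moreover have "v \<le> f s (p - 1)"
      using claw_mono[OF cl s, of j0 "p - 1"] j0 \<open>j0 < p\<close> \<open>p - 1 \<le> k s\<close> by simp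
    ultimately have "f s (p - 1) = v" by simp
    have "n + 1 \<le> x + m \<longleftrightarrow> Suc v \<le> x" for x
      using v(1) unfolding m_def by arith
    then have "rot n m k f s (k s) = cyc_shift n m (f s (cyc_shift (k s) p (k s)))"
      using p by (intro rot_eq_if_threshold) auto
    also have "cyc_shift (k s) p (k s) = p - 1"
      using \<open>j0 < p\<close> p(1) by (simp add: cyc_shift_def mod_if)
    also have "cyc_shift n m (f s (p - 1)) = n"
      using \<open>f s (p - 1) = v\<close> v(1) by (simp add: cyc_shift_def m_def)
    finally show ?thesis .
  qed
  then show ?thesis unfolding right_active_def m_def by (intro exI[of _ "n - v"]) auto
qed

lemma cyc_compatible_iff_all_rot_compatible:
  assumes cl: "claw n S k f"
  shows "cyc_compatible n S k f \<longleftrightarrow> (\<forall>m\<le>n. compatible n S k (rot n m k f))"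
proof (intro iffI allI impI)
  fix m assume "cyc_compatible n S k f"
  then have "cyc_compatible n S k (rot n m k f)" using cyc_compatible_rot_iff[OF cl] by simp
  then show "compatible n S k (rot n m k f)" by (simp add: cyc_compatible_def)
next
  assume rot_compatible: "\<forall>m\<le>n. compatible n S k (rot n m k f)"
  then have "fibre_compatible n S k (rot n 0 k f)" by (simp add: compatible_iff_fibre_edge)
  then have "fibre_compatible n S k f" by (simp add: fibre_compatible_rot_iff[OF cl])
  moreover have "edge_compatible n S k f a" if a: "a \<le> n" for a
  proof (cases "n = 0")
    case True
    have "0 \<in> img k f s" if "s \<in> S" for s
    proof -
      have "f s 0 \<in> img k f s" by (simp add: img_def)
      then show ?thesis using claw_le[OF cl that, of 0] True by simp
    qed
    moreover have "a = 0" "cyc_shift n 1 0 = 0" using True a by (simp_all add: cyc_shift_def)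
    ultimately have "{a, cyc_shift n 1 a} \<subseteq> img k f s" if "s \<in> S" for s
      using that by simp
    then show ?thesis unfolding edge_compatible_def by blast
  next
    case False
    define m where "m = (Suc n - a) mod Suc n" \<comment> \<open>the rotation taking a to 0\<close>
    have "m \<le> n" unfolding m_def using less_Suc_eq_le by simp
    then have "edge_compatible n S k (rot n m k f) 0"
      using rot_compatible False by (simp add: compatible_iff_fibre_edge)
    moreover have "cyc_shift n m a = 0"
      using a unfolding m_def cyc_shift_def by (simp add: mod_add_right_eq)
    ultimately show ?thesis using edge_compatible_rot_iff[OF cl a, of m] by simp
  qed
  ultimately show "cyc_compatible n S k f"
    by (simp add: cyc_compatible_iff_fibre_edge)
qed

lemma cyc_compatible_iff_exists_rot:
  assumes cl: "claw n S k f"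
    and cyc_if_P: "\<And>g. compatible n S k g \<Longrightarrow> P g \<Longrightarrow> cyc_compatible n S k g"
    and P_rot: "\<And>v. v \<le> n \<Longrightarrow> \<forall>s\<in>S. v \<in> img k f s \<Longrightarrow> \<exists>m\<le>n. P (rot n m k f)"
  shows "cyc_compatible n S k f \<longleftrightarrow> (\<exists>m\<le>n. P (rot n m k f) \<and> compatible n S k (rot n m k f))"
proof
  assume cyc: "cyc_compatible n S k f"
  then have "compatible n S k f" by (simp add: cyc_compatible_def)
  then obtain v where "v \<le> n" "\<forall>s\<in>S. v \<in> img k f s"
    using compatible_common_vertex[OF cl] by blast
  then obtain m where "m \<le> n" "P (rot n m k f)"
    using P_rot by blast
  with cyc show "\<exists>m\<le>n. P (rot n m k f) \<and> compatible n S k (rot n m k f)"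
    using cyc_compatible_iff_all_rot_compatible[OF cl] by blast
next
  assume "\<exists>m\<le>n. P (rot n m k f) \<and> compatible n S k (rot n m k f)"
  then obtain m where "P (rot n m k f)" "compatible n S k (rot n m k f)" by blast
  then have "cyc_compatible n S k (rot n m k f)" using cyc_if_P by blast
  then show "cyc_compatible n S k f" using cyc_compatible_rot_iff[OF cl] by blast
qed

lemma cyc_compatible_iff_exists_rot_left_active:
  assumes "claw n S k f"
  shows "cyc_compatible n S k f \<longleftrightarrow>
           (\<exists>m\<le>n. left_active S (rot n m k f) \<and> compatible n S k (rot n m k f))"
  by (rule cyc_compatible_iff_exists_rot[OF assms])
    (fact cyc_compatible_if_left_active, fact exists_rot_left_active[OF assms])

lemma cyc_compatible_iff_exists_rot_right_active:
  assumes "claw n S k f"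
  shows "cyc_compatible n S k f \<longleftrightarrow>
           (\<exists>m\<le>n. right_active n S k (rot n m k f) \<and> compatible n S k (rot n m k f))"
  by (rule cyc_compatible_iff_exists_rot[OF assms])
    (fact cyc_compatible_if_right_active, fact exists_rot_right_active[OF assms])

theorem lemma4p2p6:
  fixes n :: nat and S :: "'s set" and k :: "'s \<Rightarrow> nat" and f :: "'s \<Rightarrow> nat \<Rightarrow> nat"
  assumes "claw n S k f"
  shows "(compatible n S k f \<and> (left_active S f \<or> right_active n S k f)
            \<longrightarrow> cyc_compatible n S k f)
       \<and> (cyc_compatible n S k f \<longleftrightarrow> (\<forall>m\<le>n. compatible n S k (rot n m k f)))
       \<and> (cyc_compatible n S k f \<longleftrightarrow>
            (\<exists>m\<le>n. left_active S (rot n m k f) \<and> compatible n S k (rot n m k f)))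
       \<and> (cyc_compatible n S k f \<longleftrightarrow>
            (\<exists>m\<le>n. right_active n S k (rot n m k f) \<and> compatible n S k (rot n m k f)))"
proof (intro conjI impI)
  show "cyc_compatible n S k f" if "compatible n S k f \<and> (left_active S f \<or> right_active n S k f)"
    using that cyc_compatible_if_left_active cyc_compatible_if_right_active by blast
qed (fact cyc_compatible_iff_all_rot_compatible[OF assms]
    cyc_compatible_iff_exists_rot_left_active[OF assms]
    cyc_compatible_iff_exists_rot_right_active[OF assms])+

end
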